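(* For all $n\ge1$, $a_{\{0101,0120\}}(n)=a_{\{101,120\}}(n)=|S_n(231,4123)|$. Moreover, with the convention $a_{\{0101,0120\}}(0)=1$, $$\sum_{n\ge0}a_{\{0101,0120\}}(n)\,x^n=\frac{(1-x)^3}{1-4x+5x^2-3x^3}.$$
   Context: An ascent in an integer sequence $s_1\cdots s_m$ is an index $j$ with $s_j<s_{j+1}$; $\mathrm{asc}$ denotes the number of ascents. An ascent sequence is a sequence $x_1\cdots x_n$ of nonnegative integers with $x_1=0$ and $x_i\le 1+\mathrm{asc}(x_1\cdots x_{i-1})$ for all $i\ge2$. The reduction $\mathrm{red}(w)$ of an integer sequence $w$ replaces the $i$-th smallest distinct letter of $w$ by $i-1$; a pattern is a reduced sequence. A sequence $x$ contains a pattern $p=p_1\cdots p_k$ if there are indices $i_1<\cdots<i_k$ with $\mathrm{red}(x_{i_1}\cdots x_{i_k})=p$; otherwise $x$ avoids $p$. For a finite set $P$ of patterns, $a_P(n)$ denotes the number of ascent sequences of length $n$ avoiding every pattern in $P$. $S_n(231,4123)$ is the set of permutations of $\{1,\dots,n\}$ avoiding (in the classical sense) both the permutation patterns $231$ and $4123$. *)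

theory Defs
  imports "HOL-Library.Sublist" "HOL-Computational_Algebra.Formal_Power_Series"
begin

definition asc :: "nat list \<Rightarrow> nat" where
  "asc s = card {j. Suc j < length s \<and> s ! j < s ! Suc j}"

definition ascent_seq :: "nat list \<Rightarrow> bool" where
  "ascent_seq x \<longleftrightarrow> x \<noteq> [] \<and> x ! 0 = 0 \<and>
     (\<forall>i. 1 \<le> i \<and> i < length x \<longrightarrow> x ! i \<le> 1 + asc (take i x))"

definition red :: "nat list \<Rightarrow> nat list" where
  "red w = map (\<lambda>a. card {b \<in> set w. b < a}) w"

definition contains :: "nat list \<Rightarrow> nat list \<Rightarrow> bool" where
  "contains x p \<longleftrightarrow> (\<exists>ys. subseq ys x \<and> red ys = p)"

definition avoids_all :: "nat list \<Rightarrow> nat list set \<Rightarrow> bool" where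
  "avoids_all x P \<longleftrightarrow> (\<forall>p\<in>P. \<not> contains x p)"

definition a_P :: "nat list set \<Rightarrow> nat \<Rightarrow> nat" where
  "a_P P n = card {x. length x = n \<and> ascent_seq x \<and> avoids_all x P}"

text \<open>Permutations of {1..n} in one-line notation, and classical pattern containment
  (order-isomorphic subsequence); the permutation pattern q (on 1..k) is compared
  after shifting to 0..k-1, which is what red produces on distinct letters.\<close>
definition is_perm :: "nat \<Rightarrow> nat list \<Rightarrow> bool" where
  "is_perm n s \<longleftrightarrow> length s = n \<and> distinct s \<and> set s = {1..n}"

definition perm_contains :: "nat list \<Rightarrow> nat list \<Rightarrow> bool" where
  "perm_contains s q \<longleftrightarrow> (\<exists>ys. subseq ys s \<and> red ys = map (\<lambda>i. i - 1) q)"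

definition S_231_4123 :: "nat \<Rightarrow> nat list set" where
  "S_231_4123 n = {s. is_perm n s \<and> \<not> perm_contains s [2,3,1] \<and> \<not> perm_contains s [4,1,2,3]}"

end

theory Submission
  imports Defs
begin

text \<open>
  Both avoidance classes coincide with the language of a three-state automaton on ascent
  sequences.  It starts from 0; at each step it may repeat the last letter or rise to one more
  than the current maximum M, and when the last letter is M, reached by a rise that did not
  directly follow a dip, it may also dip to M - 1.  Every other letter allowed in an ascent
  sequence creates an occurrence of 101 or 120 and at the same time one of 0101 or 0120, so a
  sequence avoiding either pair of patterns is accepted, while accepted sequences avoid all four.
  Counting accepted words by final state gives three linear equations for their generating
  functions, whose sum is (1 - x)^3 / (1 - 4x + 5x^2 - 3x^3).

  A permutation avoiding 231 splits around its maximum as a (n+1) b with every letter of a below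
  every letter of b; it also avoids 4123 iff a avoids 231 and 4123 and b avoids 231 and 123.
  There are 1 + n(n-1)/2 permutations avoiding 231 and 123, and F = 1 + x F T for the two
  generating functions leads to the same rational function.
\<close>

unbundle fps_syntax

section \<open>Subsequences\<close>

lemma set_mono_subseq: "subseq xs ys \<Longrightarrow> set xs \<subseteq> set ys"
  by (induction rule: list_emb.induct) auto

lemma subseq_singleton_right_iff: "subseq ys [x] \<longleftrightarrow> ys = [] \<or> ys = [x]"
  by (cases ys) (auto simp: subseq_singleton_left dest: subseq_Cons')

lemma subseq_snoc_iff:
  "subseq ys (xs @ [x]) \<longleftrightarrow> subseq ys xs \<or> (\<exists>zs. ys = zs @ [x] \<and> subseq zs xs)"
  by (auto simp: subseq_append_iff subseq_singleton_right_iff)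

lemma subseq_Cons_Cons_iff:
  "subseq (a # ys) (x # xs) \<longleftrightarrow> a = x \<and> subseq ys xs \<or> subseq (a # ys) xs"
  by (cases "a = x") (auto dest: subseq_Cons')

lemma subseq_Cons_right_iff:
  "subseq ys (x # xs) \<longleftrightarrow> subseq ys xs \<or> (\<exists>zs. ys = x # zs \<and> subseq zs xs)"
  by (cases ys) (auto simp: subseq_Cons_Cons_iff dest: subseq_Cons')

lemma subseq_append_Cons_iff:
  "subseq ys (a @ N # g) \<longleftrightarrow>
     (\<exists>ya yg. subseq ya a \<and> subseq yg g \<and> (ys = ya @ yg \<or> ys = ya @ N # yg))"
  unfolding subseq_append_iff[of ys a] subseq_Cons_right_iff by blast

lemma subseq_map_right_iff:
  "subseq ys (map f xs) \<longleftrightarrow> (\<exists>zs. ys = map f zs \<and> subseq zs xs)"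
proof (induction xs arbitrary: ys)
  case (Cons x xs)
  show ?case
    unfolding list.map(2) subseq_Cons_right_iff Cons.IH
    by (auto simp: subseq_Cons_right_iff) (metis list.simps(9))
qed (auto dest: list_emb_Nil2)

lemma subseq_snoc_last:
  assumes "subseq ys xs" "ys \<noteq> []" "last ys \<noteq> last xs"
  shows "subseq (ys @ [last xs]) xs"
proof -
  obtain zs z where xs: "xs = zs @ [z]"
    using assms(1,2) by (cases xs rule: rev_cases) auto
  then have "subseq ys zs"
    using assms subseq_snoc_iff[of ys zs z] by auto
  then show ?thesis using xs by simp
qed

lemma sorted_wrt_iff_subseq:
  "sorted_wrt R xs \<longleftrightarrow> (\<forall>a b. subseq [a, b] xs \<longrightarrow> R a b)"
proof (induction xs)
  case (Cons x xs)
  have "subseq [a, b] xs \<Longrightarrow> b \<in> set xs" for a b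
    using set_mono_subseq by fastforce
  then have "(\<forall>a b. subseq [a, b] (x # xs) \<longrightarrow> R a b) \<longleftrightarrow>
      (\<forall>b\<in>set xs. R x b) \<and> (\<forall>a b. subseq [a, b] xs \<longrightarrow> R a b)"
    by (auto simp: subseq_Cons_Cons_iff subseq_singleton_left)
  then show ?case using Cons.IH by simp
qed simp

section \<open>Reduction and pattern containment\<close>

lemma length_red [simp]: "length (red w) = length w"
  by (simp add: red_def)

lemma red_nth: "i < length w \<Longrightarrow> red w ! i = card {b \<in> set w. b < w ! i}"
  by (simp add: red_def)

lemma red_conv_filter: "red w = map (\<lambda>a. length (remdups (filter (\<lambda>b. b < a) w))) w"
  by (simp add: red_def flip: card_set)

lemma red_nth_less_iff:
  assumes "i < length w" "j < length w"
  shows "red w ! i < red w ! j \<longleftrightarrow> w ! i < w ! j"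
proof
  assume less: "w ! i < w ! j"
  have "{b \<in> set w. b < w ! i} \<subseteq> {b \<in> set w. b < w ! j}"
    using less by auto
  moreover have "w ! i \<in> {b \<in> set w. b < w ! j}" "w ! i \<notin> {b \<in> set w. b < w ! i}"
    using assms less by simp_all
  ultimately have "{b \<in> set w. b < w ! i} \<subset> {b \<in> set w. b < w ! j}"
    by blast
  then show "red w ! i < red w ! j"
    using assms by (simp add: red_nth psubset_card_mono)
next
  assume less: "red w ! i < red w ! j"
  show "w ! i < w ! j"
  proof (rule ccontr)
    assume "\<not> w ! i < w ! j"
    then have "{b \<in> set w. b < w ! j} \<subseteq> {b \<in> set w. b < w ! i}"
      by auto
    then have "red w ! j \<le> red w ! i"
      using assms by (simp add: red_nth card_mono)
    with less show False by simp
  qed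
qed

lemma red_nth_eq_iff:
  "i < length w \<Longrightarrow> j < length w \<Longrightarrow> red w ! i = red w ! j \<longleftrightarrow> w ! i = w ! j"
  unfolding order.eq_iff not_less[symmetric] by (simp add: red_nth_less_iff)

lemma card_image_eq_if_same_kernel:
  assumes "\<And>x y. x \<in> A \<Longrightarrow> y \<in> A \<Longrightarrow> f x = f y \<longleftrightarrow> g x = g y"
  shows "card (f ` A) = card (g ` A)"
proof -
  let ?h = "\<lambda>b. g (inv_into A f b)"
  have h: "?h (f x) = g x" if "x \<in> A" for x
  proof -
    have "inv_into A f (f x) \<in> A" "f (inv_into A f (f x)) = f x"
      using that by (simp_all add: inv_into_into f_inv_into_f)
    then show ?thesis using assms that by blast
  qed
  have inj: "inj_on ?h (f ` A)"
  proof (rule inj_onI)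
    fix b c assume "b \<in> f ` A" "c \<in> f ` A" "?h b = ?h c"
    then obtain x y where "x \<in> A" "y \<in> A" "b = f x" "c = f y" "g x = g y"
      using h by (metis imageE)
    then show "b = c" using assms by blast
  qed
  have "g ` A = ?h ` f ` A"
    using h by (simp add: image_image cong: image_cong)
  also have "card \<dots> = card (f ` A)"
    by (rule card_image[OF inj])
  finally show ?thesis by simp
qed

lemma less_letters_conv_image:
  "i < length w \<Longrightarrow> {b \<in> set w. b < w ! i} = (!) w ` {j. j < length w \<and> w ! j < w ! i}"
  by (auto simp: in_set_conv_nth)

lemma red_eq_red_iff:
  assumes "length v = length w"
  shows "red v = red w \<longleftrightarrow> (\<forall>i<length w. \<forall>j<length w. v ! i < v ! j \<longleftrightarrow> w ! i < w ! j)"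
proof
  assume red: "red v = red w"
  show "\<forall>i<length w. \<forall>j<length w. v ! i < v ! j \<longleftrightarrow> w ! i < w ! j"
  proof (intro allI impI)
    fix i j assume "i < length w" "j < length w"
    then show "v ! i < v ! j \<longleftrightarrow> w ! i < w ! j"
      using red_nth_less_iff[of i v j] red_nth_less_iff[of i w j] assms red by simp
  qed
next
  assume iso: "\<forall>i<length w. \<forall>j<length w. v ! i < v ! j \<longleftrightarrow> w ! i < w ! j"
  have "card {b \<in> set v. b < v ! i} = card {b \<in> set w. b < w ! i}" if i: "i < length w" for i
  proof -
    let ?J = "{j. j < length w \<and> w ! j < w ! i}"
    have "{j. j < length w \<and> v ! j < v ! i} = ?J"
      using iso i by (intro Collect_cong) auto
    moreover have "card ((!) v ` ?J) = card ((!) w ` ?J)"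
    proof (rule card_image_eq_if_same_kernel)
      fix x y assume "x \<in> ?J" "y \<in> ?J"
      then show "v ! x = v ! y \<longleftrightarrow> w ! x = w ! y"
        unfolding order.eq_iff not_less[symmetric] using iso by simp
    qed
    ultimately show ?thesis
      using assms i by (simp add: less_letters_conv_image)
  qed
  then show "red v = red w"
    using assms by (intro nth_equalityI) (simp_all add: red_nth)
qed

lemma red_eq_pattern_iff:
  assumes "red p = p"
  shows "red w = p \<longleftrightarrow>
    length w = length p \<and> (\<forall>i<length p. \<forall>j<length p. w ! i < w ! j \<longleftrightarrow> p ! i < p ! j)"
proof (cases "length w = length p")
  case True
  then show ?thesis using red_eq_red_iff[OF True] assms by simp
next
  case False
  then have "red w \<noteq> p" by auto
  with False show ?thesis by simp
qed

lemma red_map_strict_mono: "strict_mono f \<Longrightarrow> red (map f ys) = red ys"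
  by (subst red_eq_red_iff) (simp_all add: strict_mono_less)

lemma contains_mono: "contains x p \<Longrightarrow> subseq x y \<Longrightarrow> contains y p"
  unfolding contains_def using subseq_order.trans by blast

lemma contains_map_strict_mono:
  assumes "strict_mono f"
  shows "contains (map f xs) p \<longleftrightarrow> contains xs p"
  unfolding contains_def subseq_map_right_iff
  using red_map_strict_mono[OF assms] by auto

lemma contains_shift: "contains (map (\<lambda>v. v + k) xs) p \<longleftrightarrow> contains xs p"
  by (rule contains_map_strict_mono) (simp add: strict_mono_def)

lemma avoids_all_pair: "avoids_all x {p, q} \<longleftrightarrow> \<not> contains x p \<and> \<not> contains x q"
  by (simp add: avoids_all_def)

lemma avoids_all_singleton: "avoids_all x {p} \<longleftrightarrow> \<not> contains x p"
  by (simp add: avoids_all_def)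

lemma avoids_all_subseq: "avoids_all y P \<Longrightarrow> subseq x y \<Longrightarrow> avoids_all x P"
  unfolding avoids_all_def using contains_mono by blast

lemma contains_iff_same_length:
  "contains x p \<longleftrightarrow> (\<exists>ys. length ys = length p \<and> subseq ys x \<and> red ys = p)"
  unfolding contains_def by (metis length_red)

lemma ex_length_Suc_iff: "(\<exists>ys. length ys = Suc n \<and> P ys) \<longleftrightarrow> (\<exists>y ys. length ys = n \<and> P (y # ys))"
  by (metis length_Suc_conv)

lemma ex_length_0_iff: "(\<exists>ys. length ys = 0 \<and> P ys) \<longleftrightarrow> P []"
  by simp

lemma red_fixes_patterns:
  "red [0,1] = [0,1]" "red [0,1,2] = [0,1,2]" "red [1,0,1] = [1,0,1]" "red [1,2,0] = [1,2,0]"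
  "red [0,1,0,1] = [0,1,0,1]" "red [0,1,2,0] = [0,1,2,0]" "red [3,0,1,2] = [3,0,1,2]"
  by (simp_all add: red_conv_filter)

lemma red_eq_01: "red [a,b] = [0,1] \<longleftrightarrow> a < b"
  unfolding red_eq_pattern_iff[OF red_fixes_patterns(1)]
  by (simp add: numeral_eq_Suc All_less_Suc) arith

lemma red_eq_012: "red [a,b,c] = [0,1,2] \<longleftrightarrow> a < b \<and> b < c"
  unfolding red_eq_pattern_iff[OF red_fixes_patterns(2)]
  by (simp add: numeral_eq_Suc All_less_Suc) arith

lemma red_eq_101: "red [a,b,c] = [1,0,1] \<longleftrightarrow> b < a \<and> c = a"
  unfolding red_eq_pattern_iff[OF red_fixes_patterns(3)]
  by (simp add: numeral_eq_Suc All_less_Suc) arith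

lemma red_eq_120: "red [a,b,c] = [1,2,0] \<longleftrightarrow> c < a \<and> a < b"
  unfolding red_eq_pattern_iff[OF red_fixes_patterns(4)]
  by (simp add: numeral_eq_Suc All_less_Suc) arith

lemma red_eq_0101: "red [a,b,c,d] = [0,1,0,1] \<longleftrightarrow> a < b \<and> c = a \<and> d = b"
  unfolding red_eq_pattern_iff[OF red_fixes_patterns(5)]
  by (simp add: numeral_eq_Suc All_less_Suc) arith

lemma red_eq_0120: "red [a,b,c,d] = [0,1,2,0] \<longleftrightarrow> a < b \<and> b < c \<and> d = a"
  unfolding red_eq_pattern_iff[OF red_fixes_patterns(6)]
  by (simp add: numeral_eq_Suc All_less_Suc) arith

lemma red_eq_3012: "red [a,b,c,d] = [3,0,1,2] \<longleftrightarrow> b < c \<and> c < d \<and> d < a"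
  unfolding red_eq_pattern_iff[OF red_fixes_patterns(7)]
  by (simp add: numeral_eq_Suc All_less_Suc) arith

lemma contains_01: "contains x [0,1] \<longleftrightarrow> (\<exists>a b. subseq [a,b] x \<and> a < b)"
  unfolding contains_iff_same_length
  by (simp only: length_Cons list.size(3) ex_length_Suc_iff ex_length_0_iff red_eq_01)

lemma contains_012: "contains x [0,1,2] \<longleftrightarrow> (\<exists>a b c. subseq [a,b,c] x \<and> a < b \<and> b < c)"
  unfolding contains_iff_same_length
  by (simp only: length_Cons list.size(3) ex_length_Suc_iff ex_length_0_iff red_eq_012)

lemma contains_101: "contains x [1,0,1] \<longleftrightarrow> (\<exists>a b. subseq [a,b,a] x \<and> b < a)"
  unfolding contains_iff_same_length
  by (simp only: length_Cons list.size(3) ex_length_Suc_iff ex_length_0_iff red_eq_101) blast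

lemma contains_120: "contains x [1,2,0] \<longleftrightarrow> (\<exists>a b c. subseq [a,b,c] x \<and> c < a \<and> a < b)"
  unfolding contains_iff_same_length
  by (simp only: length_Cons list.size(3) ex_length_Suc_iff ex_length_0_iff red_eq_120)

lemma contains_0101: "contains x [0,1,0,1] \<longleftrightarrow> (\<exists>a b. subseq [a,b,a,b] x \<and> a < b)"
  unfolding contains_iff_same_length
  by (simp only: length_Cons list.size(3) ex_length_Suc_iff ex_length_0_iff red_eq_0101) blast

lemma contains_0120: "contains x [0,1,2,0] \<longleftrightarrow> (\<exists>a b c. subseq [a,b,c,a] x \<and> a < b \<and> b < c)"
  unfolding contains_iff_same_length
  by (simp only: length_Cons list.size(3) ex_length_Suc_iff ex_length_0_iff red_eq_0120) blast

lemma contains_3012: "contains x [3,0,1,2] \<longleftrightarrow> (\<exists>a b c d. subseq [a,b,c,d] x \<and> b < c \<and> c < d \<and> d < a)"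
  unfolding contains_iff_same_length
  by (simp only: length_Cons list.size(3) ex_length_Suc_iff ex_length_0_iff red_eq_3012)

lemma contains_3012_imp_012: "contains x [3,0,1,2] \<Longrightarrow> contains x [0,1,2]"
  unfolding contains_3012 contains_012 by (blast dest: subseq_Cons')

lemma contains_012_imp_01: "contains x [0,1,2] \<Longrightarrow> contains x [0,1]"
  unfolding contains_012 contains_01
  by (meson prefix_imp_subseq prefix_code(2) prefix_Cons subseq_order.trans)

lemma contains_120_imp_01: "contains x [1,2,0] \<Longrightarrow> contains x [0,1]"
  unfolding contains_120 contains_01
  by (meson prefix_imp_subseq prefix_code(2) prefix_Cons subseq_order.trans)

text \<open>
  An occurrence using the repeated last letter can use its earlier copy instead, unless the
  pattern ends with two equal letters.
\<close>

lemma contains_snoc_last_iff: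
  assumes "c \<noteq> d" "x \<noteq> []"
  shows "contains (x @ [last x]) (q @ [c, d]) \<longleftrightarrow> contains x (q @ [c, d])"
proof
  assume "contains (x @ [last x]) (q @ [c, d])"
  then obtain ys where ys: "subseq ys (x @ [last x])" "red ys = q @ [c, d]"
    unfolding contains_def by blast
  show "contains x (q @ [c, d])"
  proof (cases "subseq ys x")
    case True
    then show ?thesis using ys(2) unfolding contains_def by blast
  next
    case False
    with ys(1) obtain zs where zs: "ys = zs @ [last x]" "subseq zs x"
      unfolding subseq_snoc_iff by blast
    let ?k = "length q"
    have len: "length zs = Suc ?k"
      using arg_cong[OF ys(2), of length] zs(1) by simp
    have "red ys ! ?k \<noteq> red ys ! Suc ?k"
      using ys(2) assms(1) by (simp add: nth_append)
    then have "ys ! ?k \<noteq> ys ! Suc ?k"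
      using len zs(1) by (simp add: red_nth_eq_iff)
    moreover have "zs \<noteq> []" using len by auto
    then have "last zs = zs ! ?k"
      using len by (simp add: last_conv_nth)
    ultimately have "last zs \<noteq> last x"
      using len zs(1) by (simp add: nth_append)
    then have "subseq (zs @ [last x]) x"
      using zs(2) len by (intro subseq_snoc_last) auto
    then show ?thesis using ys(2) zs(1) unfolding contains_def by blast
  qed
next
  assume "contains x (q @ [c, d])"
  then show "contains (x @ [last x]) (q @ [c, d])"
    by (rule contains_mono) (simp add: prefix_imp_subseq)
qed

lemma contains_101_snoc:
  "contains (x @ [v]) [1,0,1] \<longleftrightarrow> contains x [1,0,1] \<or> (\<exists>b. subseq [v, b] x \<and> b < v)"
  unfolding contains_101 by (auto simp: subseq_snoc_iff)

lemma contains_120_snoc: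
  "contains (x @ [v]) [1,2,0] \<longleftrightarrow> contains x [1,2,0] \<or> (\<exists>a b. subseq [a, b] x \<and> v < a \<and> a < b)"
  unfolding contains_120 by (auto simp: subseq_snoc_iff)

lemma contains_0101_snoc:
  "contains (x @ [v]) [0,1,0,1] \<longleftrightarrow> contains x [0,1,0,1] \<or> (\<exists>a. subseq [a, v, a] x \<and> a < v)"
  unfolding contains_0101 by (auto simp: subseq_snoc_iff)

lemma contains_0120_snoc:
  "contains (x @ [v]) [0,1,2,0] \<longleftrightarrow> contains x [0,1,2,0] \<or> (\<exists>b c. subseq [v, b, c] x \<and> v < b \<and> b < c)"
  unfolding contains_0120 by (auto simp: subseq_snoc_iff)

section \<open>Ascent sequences\<close>

lemma asc_snoc:
  assumes "x \<noteq> []"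
  shows "asc (x @ [v]) = asc x + (if last x < v then 1 else 0)"
proof -
  let ?A = "{j. Suc j < length x \<and> x ! j < x ! Suc j}"
  have "{j. Suc j < length (x @ [v]) \<and> (x @ [v]) ! j < (x @ [v]) ! Suc j}
      = ?A \<union> {j. j = length x - 1 \<and> last x < v}" (is "?L = _")
  proof (rule set_eqI)
    fix j
    show "j \<in> ?L \<longleftrightarrow> j \<in> ?A \<union> {j. j = length x - 1 \<and> last x < v}"
      using assms by (cases "Suc j < length x"; cases "j = length x - 1")
        (auto simp: nth_append last_conv_nth)
  qed
  moreover have "finite ?A"
    by (rule finite_subset[of _ "{..<length x}"]) auto
  moreover have "length x - 1 \<notin> ?A"
    by auto
  ultimately show ?thesis
    unfolding asc_def by (cases "last x < v") simp_all
qed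

lemma asc_le_length: "asc x \<le> length x"
proof -
  have "{j. Suc j < length x \<and> x ! j < x ! Suc j} \<subseteq> {..<length x}" by auto
  then show ?thesis unfolding asc_def by (metis card_lessThan card_mono finite_lessThan)
qed

lemma ascent_seq_snoc:
  assumes "x \<noteq> []"
  shows "ascent_seq (x @ [v]) \<longleftrightarrow> ascent_seq x \<and> v \<le> 1 + asc x"
proof -
  have split: "(\<forall>i. 1 \<le> i \<and> i < Suc n \<longrightarrow> Q i) \<longleftrightarrow> (\<forall>i. 1 \<le> i \<and> i < n \<longrightarrow> Q i) \<and> (1 \<le> n \<longrightarrow> Q n)"
    for n and Q :: "nat \<Rightarrow> bool"
    by (auto simp: less_Suc_eq)
  have "1 \<le> length x" using assms by (cases x) auto
  then show ?thesis
    using assms unfolding ascent_seq_def length_append_singleton split by (simp add: nth_append)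
qed

lemma ascent_seq_nonempty: "ascent_seq x \<Longrightarrow> x \<noteq> []"
  by (simp add: ascent_seq_def)

definition max_letter :: "nat list \<Rightarrow> nat" where
  "max_letter x = Max (set x)"

lemma le_max_letter: "a \<in> set x \<Longrightarrow> a \<le> max_letter x"
  by (simp add: max_letter_def)

lemma max_letter_in_set: "x \<noteq> [] \<Longrightarrow> max_letter x \<in> set x"
  by (simp add: max_letter_def)

lemma max_letter_snoc: "x \<noteq> [] \<Longrightarrow> max_letter (x @ [v]) = max (max_letter x) v"
  by (simp add: max_letter_def max.commute)

lemma subseq_letters_le_max_letter: "subseq ys x \<Longrightarrow> \<forall>a\<in>set ys. a \<le> max_letter x"
  using set_mono_subseq le_max_letter by blast

definition no_lower_after :: "nat list \<Rightarrow> nat \<Rightarrow> bool" where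
  "no_lower_after x a \<longleftrightarrow> (\<forall>b. subseq [a, b] x \<longrightarrow> a \<le> b)"

lemma no_lower_after_snoc:
  "no_lower_after (x @ [v]) a \<longleftrightarrow> no_lower_after x a \<and> (a \<in> set x \<longrightarrow> a \<le> v)"
  by (auto simp: no_lower_after_def subseq_snoc_iff subseq_singleton_left)

definition pats_101_120 :: "nat list set" where
  "pats_101_120 = {[1,0,1], [1,2,0]}"

definition pats_0101_0120 :: "nat list set" where
  "pats_0101_0120 = {[0,1,0,1], [0,1,2,0]}"

definition contains_both :: "nat list \<Rightarrow> bool" where
  "contains_both x \<longleftrightarrow> \<not> avoids_all x pats_101_120 \<and> \<not> avoids_all x pats_0101_0120"

lemma contains_both_insert_before_last:
  assumes "contains_both (x @ [v])"
  shows "contains_both (x @ [w, v])"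
proof -
  have "subseq (x @ [v]) (x @ [w, v])"
    unfolding subseq_append' by (cases "v = w") auto
  then show ?thesis
    using assms contains_mono unfolding contains_both_def avoids_all_def by blast
qed

lemma contains_both_rise_dip:
  assumes "subseq [M - 1, M] x" "0 < M"
  shows "contains_both (x @ [Suc M, M - 1])"
proof -
  have "subseq ([M] @ [Suc M, M - 1]) (x @ [Suc M, M - 1])"
    using assms(1) by (simp only: subseq_append) (rule subseq_Cons')
  then have "contains (x @ [Suc M, M - 1]) [1,2,0]"
    unfolding contains_120 using assms(2)
    by (intro exI[of _ M] exI[of _ "Suc M"] exI[of _ "M - 1"]) simp
  moreover have "subseq ([M - 1, M] @ [Suc M, M - 1]) (x @ [Suc M, M - 1])"
    using assms(1) by (simp only: subseq_append)
  then have "contains (x @ [Suc M, M - 1]) [0,1,2,0]"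
    unfolding contains_0120 using assms(2)
    by (intro exI[of _ "M - 1"] exI[of _ M] exI[of _ "Suc M"]) simp
  ultimately show ?thesis
    unfolding contains_both_def pats_101_120_def pats_0101_0120_def avoids_all_pair by simp
qed

lemma contains_both_dip_return:
  assumes "subseq [M - 1, M] x" "0 < M"
  shows "contains_both (x @ [M - 1, M])"
proof -
  have "subseq ([M] @ [M - 1, M]) (x @ [M - 1, M])"
    using assms(1) by (simp only: subseq_append) (rule subseq_Cons')
  then have "contains (x @ [M - 1, M]) [1,0,1]"
    unfolding contains_101 using assms(2) by (intro exI[of _ M] exI[of _ "M - 1"]) simp
  moreover have "subseq ([M - 1, M] @ [M - 1, M]) (x @ [M - 1, M])"
    using assms(1) by (simp only: subseq_append)
  then have "contains (x @ [M - 1, M]) [0,1,0,1]"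
    unfolding contains_0101 using assms(2) by (intro exI[of _ "M - 1"] exI[of _ M]) simp
  ultimately show ?thesis
    unfolding contains_both_def pats_101_120_def pats_0101_0120_def avoids_all_pair by simp
qed

lemma avoids_all_snoc_last:
  assumes "x \<noteq> []"
  shows "avoids_all (x @ [last x]) pats_101_120 \<longleftrightarrow> avoids_all x pats_101_120"
    and "avoids_all (x @ [last x]) pats_0101_0120 \<longleftrightarrow> avoids_all x pats_0101_0120"
  using contains_snoc_last_iff[OF _ assms, of 0 1 "[1]"] contains_snoc_last_iff[OF _ assms, of 2 0 "[1]"]
    contains_snoc_last_iff[OF _ assms, of 0 1 "[0,1]"]
    contains_snoc_last_iff[OF _ assms, of 2 0 "[0,1]"]
  unfolding pats_101_120_def pats_0101_0120_def avoids_all_pair by simp_all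

lemma avoids_all_snoc_rise:
  shows "avoids_all x pats_101_120 \<Longrightarrow> avoids_all (x @ [Suc (max_letter x)]) pats_101_120"
    and "avoids_all x pats_0101_0120 \<Longrightarrow> avoids_all (x @ [Suc (max_letter x)]) pats_0101_0120"
  unfolding pats_101_120_def pats_0101_0120_def avoids_all_pair contains_101_snoc contains_120_snoc
    contains_0101_snoc contains_0120_snoc
  by (auto dest!: subseq_letters_le_max_letter)

lemma avoids_all_snoc_dip:
  assumes "no_lower_after x (max_letter x - 1)"
  shows "avoids_all x pats_101_120 \<Longrightarrow> avoids_all (x @ [max_letter x - 1]) pats_101_120"
    and "avoids_all x pats_0101_0120 \<Longrightarrow> avoids_all (x @ [max_letter x - 1]) pats_0101_0120"
  using assms
  unfolding pats_101_120_def pats_0101_0120_def avoids_all_pair contains_101_snoc contains_120_snoc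
    contains_0101_snoc contains_0120_snoc
  by (auto simp: no_lower_after_def dest: subseq_Cons') (auto dest!: subseq_letters_le_max_letter)

section \<open>The generating automaton\<close>

text \<open>
  With M the maximum: in state \<open>Open\<close> the last letter is M and a dip to M - 1 is possible,
  in \<open>Closed\<close> the last letter is M but no dip is possible, and in \<open>Dipped\<close> the last
  new letter was a dip.
\<close>

datatype state = Closed | Open | Dipped

fun rise :: "state \<Rightarrow> state" where
  "rise Dipped = Closed"
| "rise _ = Open"

lemma rise_eq_iff [simp]:
  "rise s = Closed \<longleftrightarrow> s = Dipped" "rise s = Open \<longleftrightarrow> s = Closed \<or> s = Open" "rise s \<noteq> Dipped"
  by (cases s; simp)+

inductive generated :: "nat list \<Rightarrow> state \<Rightarrow> bool" where
  init: "generated [0] Closed"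
| repeat: "generated x s \<Longrightarrow> generated (x @ [last x]) s"
| rise: "generated x s \<Longrightarrow> generated (x @ [Suc (max_letter x)]) (rise s)"
| dip: "generated x Open \<Longrightarrow> generated (x @ [max_letter x - 1]) Dipped"

definition admissible :: "state \<Rightarrow> nat list \<Rightarrow> nat \<Rightarrow> bool" where
  "admissible s x v \<longleftrightarrow> v = last x \<or> v = Suc (max_letter x) \<or> (s = Open \<and> v = max_letter x - 1)"

fun shape :: "state \<Rightarrow> nat list \<Rightarrow> bool" where
  "shape Closed x \<longleftrightarrow> last x = max_letter x \<and> no_lower_after x (max_letter x) \<and>
     (max_letter x = 0 \<or> \<not> no_lower_after x (max_letter x - 1))"
| "shape Open x \<longleftrightarrow> last x = max_letter x \<and> 0 < max_letter x \<and> no_lower_after x (max_letter x) \<and>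
     no_lower_after x (max_letter x - 1) \<and> subseq [max_letter x - 1, max_letter x] x"
| "shape Dipped x \<longleftrightarrow> last x = max_letter x - 1 \<and> 0 < max_letter x \<and>
     subseq [max_letter x - 1, max_letter x] x"

lemma shape_unique: "shape s x \<Longrightarrow> shape t x \<Longrightarrow> s = t"
  by (cases s; cases t) auto

text \<open>
  The last conjunct is the heart of the argument: every letter the automaton refuses creates an
  occurrence from each of the two pattern families.
\<close>

definition state_inv :: "nat list \<Rightarrow> state \<Rightarrow> bool" where
  "state_inv x s \<longleftrightarrow> ascent_seq x \<and> asc x = max_letter x \<and>
     avoids_all x pats_101_120 \<and> avoids_all x pats_0101_0120 \<and> shape s x \<and>
     (\<forall>v \<le> Suc (max_letter x). \<not> admissible s x v \<longrightarrow> contains_both (x @ [v]))"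

lemma state_inv_init: "state_inv [0] Closed"
proof -
  have "avoids_all [0] pats_101_120" "avoids_all [0] pats_0101_0120"
    unfolding pats_101_120_def pats_0101_0120_def avoids_all_pair
      contains_101 contains_120 contains_0101 contains_0120
    by (auto dest: list_emb_length)
  moreover have "no_lower_after [0] 0"
    by (auto simp: no_lower_after_def dest: list_emb_length)
  ultimately show ?thesis
    by (auto simp: state_inv_def ascent_seq_def asc_def max_letter_def admissible_def)
qed

lemma state_inv_repeat:
  assumes inv: "state_inv x s"
  shows "state_inv (x @ [last x]) s"
proof -
  have x: "x \<noteq> []" "last x \<le> max_letter x"
    using inv by (auto simp: state_inv_def ascent_seq_nonempty le_max_letter)
  then have max: "max_letter (x @ [last x]) = max_letter x"
    by (simp add: max_letter_snoc)
  have "shape s (x @ [last x])"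
    using inv x by (cases s) (auto simp: state_inv_def max_letter_snoc max_def no_lower_after_snoc)
  moreover have "admissible s (x @ [last x]) v \<longleftrightarrow> admissible s x v" for v
    by (simp add: admissible_def max)
  ultimately show ?thesis
    using inv x by (auto simp: state_inv_def max asc_snoc ascent_seq_snoc avoids_all_snoc_last
        intro: contains_both_insert_before_last)
qed

lemma contains_both_after_rise:
  assumes inv: "state_inv x s"
    and v: "v \<le> max_letter x" "rise s = Open \<Longrightarrow> v \<noteq> max_letter x"
  shows "contains_both (x @ [Suc (max_letter x), v])"
proof -
  let ?M = "max_letter x"
  have "\<not> admissible s x v \<or> (v = ?M - 1 \<and> subseq [?M - 1, ?M] x \<and> 0 < ?M)"
    using inv v by (cases s) (auto simp: state_inv_def admissible_def)
  then show ?thesis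
  proof
    assume "\<not> admissible s x v"
    then show ?thesis
      using inv v(1) by (auto simp: state_inv_def intro: contains_both_insert_before_last)
  next
    assume "v = ?M - 1 \<and> subseq [?M - 1, ?M] x \<and> 0 < ?M"
    then show ?thesis
      using contains_both_rise_dip[of ?M x] by simp
  qed
qed

lemma state_inv_rise:
  assumes inv: "state_inv x s"
  shows "state_inv (x @ [Suc (max_letter x)]) (rise s)"
proof -
  let ?M = "max_letter x" and ?y = "x @ [Suc (max_letter x)]"
  have x: "x \<noteq> []" "last x \<le> ?M" "?M \<in> set x" "Suc ?M \<notin> set x"
    using inv by (auto simp: state_inv_def ascent_seq_nonempty le_max_letter max_letter_in_set
        dest: le_max_letter)
  have max: "max_letter ?y = Suc ?M"
    using x by (simp add: max_letter_snoc)
  have step: "subseq [?M, Suc ?M] ?y"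
    using subseq_append[of "[?M]" "[Suc ?M]" x] x(3) by (simp add: subseq_singleton_left)
  have no_lower_new: "no_lower_after ?y (Suc ?M)"
    using x(4) by (auto simp: no_lower_after_def subseq_snoc_iff dest!: set_mono_subseq)
  have "shape (rise s) ?y"
  proof (cases s)
    case Dipped
    then have last: "last x = ?M - 1" "0 < ?M"
      using inv by (simp_all add: state_inv_def)
    then have "subseq ([?M] @ [last x]) x"
      using x(3) by (intro subseq_snoc_last) (auto simp: subseq_singleton_left)
    then have "\<not> no_lower_after x ?M"
      using last by (auto simp: no_lower_after_def)
    then show ?thesis
      using Dipped max no_lower_new by (simp add: no_lower_after_snoc)
  qed (use inv x max no_lower_new step in \<open>auto simp: state_inv_def no_lower_after_snoc\<close>)
  moreover have "contains_both (?y @ [v])"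
    if "v \<le> Suc (max_letter ?y)" "\<not> admissible (rise s) ?y v" for v
    using contains_both_after_rise[OF inv, of v] that by (auto simp: admissible_def max)
  ultimately show ?thesis
    using inv x max by (auto simp: state_inv_def asc_snoc ascent_seq_snoc avoids_all_snoc_rise)
qed

lemma state_inv_dip:
  assumes inv: "state_inv x Open"
  shows "state_inv (x @ [max_letter x - 1]) Dipped"
proof -
  let ?M = "max_letter x" and ?y = "x @ [max_letter x - 1]"
  have x: "x \<noteq> []" "last x = ?M" "0 < ?M" "no_lower_after x (?M - 1)" "subseq [?M - 1, ?M] x"
    using inv by (auto simp: state_inv_def ascent_seq_nonempty)
  have max: "max_letter ?y = ?M"
    using x by (simp add: max_letter_snoc)
  have "avoids_all ?y pats_101_120" "avoids_all ?y pats_0101_0120"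
    using avoids_all_snoc_dip[OF x(4)] inv by (simp_all add: state_inv_def)
  moreover have "shape Dipped ?y"
    using x max by (auto intro: subseq_rev_drop_many)
  moreover have "contains_both (?y @ [v])"
    if "v \<le> Suc (max_letter ?y)" "\<not> admissible Dipped ?y v" for v
  proof (cases "v = ?M")
    case True
    then show ?thesis using contains_both_dip_return[OF x(5,3)] by simp
  next
    case False
    then have "\<not> admissible Open x v" "v \<le> Suc ?M"
      using that x by (auto simp: admissible_def max_letter_snoc)
    then show ?thesis
      using inv by (auto simp: state_inv_def intro: contains_both_insert_before_last)
  qed
  ultimately show ?thesis
    using inv x max by (auto simp: state_inv_def asc_snoc ascent_seq_snoc)
qed

lemma generated_nonempty: "generated x s \<Longrightarrow> x \<noteq> []"
  by (induction rule: generated.induct) auto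

lemma state_inv_generated: "generated x s \<Longrightarrow> state_inv x s"
  by (induction rule: generated.induct)
    (blast intro: state_inv_init state_inv_repeat state_inv_rise state_inv_dip)+

lemma generated_unique: "generated x s \<Longrightarrow> generated x t \<Longrightarrow> s = t"
  by (meson shape_unique state_inv_def state_inv_generated)

lemma generated_snoc_if_avoids:
  assumes gen: "generated y s" and asc: "ascent_seq (y @ [v])"
    and avoids: "avoids_all (y @ [v]) pats_101_120 \<or> avoids_all (y @ [v]) pats_0101_0120"
  shows "\<exists>t. generated (y @ [v]) t"
proof -
  have inv: "state_inv y s"
    using gen by (rule state_inv_generated)
  have "admissible s y v"
  proof (rule ccontr)
    assume "\<not> admissible s y v"
    moreover have "v \<le> Suc (max_letter y)"
      using asc inv ascent_seq_snoc[of y v] by (simp add: state_inv_def ascent_seq_nonempty)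
    ultimately have "contains_both (y @ [v])"
      using inv by (simp add: state_inv_def)
    with avoids show False
      by (simp add: contains_both_def)
  qed
  then consider "v = last y" | "v = Suc (max_letter y)" | "s = Open" "v = max_letter y - 1"
    unfolding admissible_def by blast
  then show ?thesis
    by cases (use gen generated.intros(2-4) in blast)+
qed

lemma generated_if_avoids:
  assumes "ascent_seq x" "avoids_all x pats_101_120 \<or> avoids_all x pats_0101_0120"
  shows "\<exists>s. generated x s"
  using assms
proof (induction x rule: rev_induct)
  case Nil
  then show ?case by (simp add: ascent_seq_def)
next
  case (snoc v y)
  show ?case
  proof (cases "y = []")
    case True
    then show ?thesis
      using snoc.prems(1) generated.init by (auto simp: ascent_seq_def)
  next
    case False
    have "ascent_seq y"
      using snoc.prems(1) ascent_seq_snoc[OF False] by simp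
    moreover have "avoids_all y pats_101_120 \<or> avoids_all y pats_0101_0120"
      using snoc.prems(2) avoids_all_subseq[of "y @ [v]" _ y] by (auto simp: prefix_imp_subseq)
    ultimately obtain s where "generated y s"
      using snoc.IH by blast
    then show ?thesis
      using snoc.prems by (rule generated_snoc_if_avoids)
  qed
qed

lemma ascent_avoiders_eq_generated:
  shows "{x. length x = n \<and> ascent_seq x \<and> avoids_all x pats_101_120} =
      {x. length x = n \<and> (\<exists>s. generated x s)}"
    and "{x. length x = n \<and> ascent_seq x \<and> avoids_all x pats_0101_0120} =
      {x. length x = n \<and> (\<exists>s. generated x s)}"
  using generated_if_avoids state_inv_generated by (auto simp: state_inv_def)

section \<open>Counting the ascent sequences\<close>

definition gen_words :: "nat \<Rightarrow> state \<Rightarrow> nat list set" where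
  "gen_words n s = {x. length x = n \<and> generated x s}"

lemma finite_gen_words: "finite (gen_words n s)"
proof (rule finite_subset)
  show "gen_words n s \<subseteq> {x. set x \<subseteq> {..n} \<and> length x = n}"
  proof
    fix x assume "x \<in> gen_words n s"
    then have "\<forall>a\<in>set x. a \<le> max_letter x" "max_letter x = asc x" "length x = n"
      using state_inv_generated by (auto simp: gen_words_def state_inv_def le_max_letter)
    then show "x \<in> {x. set x \<subseteq> {..n} \<and> length x = n}"
      using asc_le_length[of x] by auto
  qed
  show "finite {x. set x \<subseteq> {..n} \<and> length x = n}"
    by (rule finite_lists_length_eq) simp
qed

lemma gen_words_0: "gen_words 0 s = {}"
  by (auto simp: gen_words_def dest: generated_nonempty)

lemma gen_words_1: "gen_words (Suc 0) s = (if s = Closed then {[0]} else {})"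
proof -
  have "x = [0] \<and> s = Closed" if "generated x s" "length x = 1" for x
    using that by (cases rule: generated.cases) (auto dest: generated_nonempty)
  then show ?thesis
    by (auto simp: gen_words_def intro: generated.init)
qed

lemma generated_snocE:
  assumes "generated (x @ [v]) t" "x \<noteq> []"
  obtains (repeat) "generated x t" "v = last x"
    | (rise) s where "generated x s" "rise s = t" "v = Suc (max_letter x)"
    | (dip) "generated x Open" "t = Dipped" "v = max_letter x - 1"
  using assms by (cases rule: generated.cases) auto

lemma mem_gen_words_Suc:
  assumes "n \<noteq> 0"
  shows "y \<in> gen_words (Suc n) t \<longleftrightarrow> (\<exists>x. length x = n \<and>
    (generated x t \<and> y = x @ [last x] \<or>
     (\<exists>s. generated x s \<and> rise s = t \<and> y = x @ [Suc (max_letter x)]) \<or>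
     generated x Open \<and> t = Dipped \<and> y = x @ [max_letter x - 1]))" (is "_ \<longleftrightarrow> ?R")
proof
  assume "y \<in> gen_words (Suc n) t"
  then obtain x v where y: "y = x @ [v]" "length x = n" "generated (x @ [v]) t"
    by (cases y rule: rev_cases) (auto simp: gen_words_def)
  then have "x \<noteq> []" using assms by auto
  with y(3) show ?R
    using y(1,2) by (cases rule: generated_snocE) blast+
next
  assume ?R
  then obtain x where x: "length x = n" "generated x t \<and> y = x @ [last x] \<or>
     (\<exists>s. generated x s \<and> rise s = t \<and> y = x @ [Suc (max_letter x)]) \<or>
     generated x Open \<and> t = Dipped \<and> y = x @ [max_letter x - 1]"
    by blast
  then have "generated y t"
    by (blast intro: generated.intros)
  moreover have "length y = Suc n"
    using x by auto
  ultimately show "y \<in> gen_words (Suc n) t"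
    by (simp add: gen_words_def)
qed

lemma gen_words_Suc:
  assumes "n \<noteq> 0"
  shows "gen_words (Suc n) Closed =
      (\<lambda>x. x @ [last x]) ` gen_words n Closed \<union> (\<lambda>x. x @ [Suc (max_letter x)]) ` gen_words n Dipped"
    and "gen_words (Suc n) Open =
      (\<lambda>x. x @ [last x]) ` gen_words n Open \<union>
      (\<lambda>x. x @ [Suc (max_letter x)]) ` (gen_words n Closed \<union> gen_words n Open)"
    and "gen_words (Suc n) Dipped =
      (\<lambda>x. x @ [last x]) ` gen_words n Dipped \<union> (\<lambda>x. x @ [max_letter x - 1]) ` gen_words n Open"
  unfolding set_eq_iff mem_gen_words_Suc[OF assms] by (auto simp: gen_words_def)

lemma card_snoc_image: "card ((\<lambda>x. x @ [f x]) ` A) = card A"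
  by (rule card_image) (simp add: inj_on_def)

lemma gen_words_disjoint: "s \<noteq> t \<Longrightarrow> gen_words n s \<inter> gen_words n t = {}"
  using generated_unique by (auto simp: gen_words_def)

lemma card_snoc_images_Un:
  assumes "finite A" "finite B" "\<And>x. x \<in> A \<Longrightarrow> x \<in> B \<Longrightarrow> f x \<noteq> g x"
  shows "card ((\<lambda>x. x @ [f x]) ` A \<union> (\<lambda>x. x @ [g x]) ` B) = card A + card B"
proof -
  have "(\<lambda>x. x @ [f x]) ` A \<inter> (\<lambda>x. x @ [g x]) ` B = {}"
    using assms(3) by auto
  then show ?thesis
    using assms(1,2) by (simp add: card_Un_disjoint card_snoc_image)
qed

lemma last_ne_Suc_max_letter: "x \<in> gen_words n s \<Longrightarrow> last x \<noteq> Suc (max_letter x)"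
proof -
  assume "x \<in> gen_words n s"
  then have "x \<noteq> []"
    by (auto simp: gen_words_def dest: generated_nonempty)
  then have "last x \<le> max_letter x"
    by (simp add: le_max_letter)
  then show ?thesis
    by simp
qed

lemma card_gen_words_Suc:
  shows "card (gen_words (Suc n) Closed) =
      of_bool (n = 0) + card (gen_words n Closed) + card (gen_words n Dipped)"
    and "card (gen_words (Suc n) Open) =
      card (gen_words n Closed) + 2 * card (gen_words n Open)"
    and "card (gen_words (Suc n) Dipped) =
      card (gen_words n Open) + card (gen_words n Dipped)"
proof -
  have fin: "finite (gen_words n s)" for s
    by (rule finite_gen_words)
  have disj: "gen_words n s \<inter> gen_words n t = {}" if "s \<noteq> t" for s t
    using that by (rule gen_words_disjoint)
  show "card (gen_words (Suc n) Closed) =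
      of_bool (n = 0) + card (gen_words n Closed) + card (gen_words n Dipped)"
    by (cases "n = 0")
      (simp_all add: gen_words_0 gen_words_1 gen_words_Suc card_snoc_images_Un fin last_ne_Suc_max_letter)
  show "card (gen_words (Suc n) Open) = card (gen_words n Closed) + 2 * card (gen_words n Open)"
    using disj[of Closed Open]
    by (cases "n = 0")
      (simp_all add: gen_words_0 gen_words_1 gen_words_Suc card_snoc_images_Un fin last_ne_Suc_max_letter
        card_Un_disjoint)
  show "card (gen_words (Suc n) Dipped) = card (gen_words n Open) + card (gen_words n Dipped)"
  proof (cases "n = 0")
    case False
    show ?thesis
      unfolding gen_words_Suc(3)[OF False] using disj[of Dipped Open]
      by (subst card_snoc_images_Un) (auto simp: fin)
  qed (simp add: gen_words_0 gen_words_1)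
qed

lemma fps_eq_X_mult:
  fixes f g :: "'a::comm_ring_1 fps"
  assumes "f $ 0 = 0" "\<And>n. f $ Suc n = g $ n"
  shows "f = fps_X * g"
proof (rule fps_ext)
  fix n show "f $ n = (fps_X * g) $ n"
    using assms by (cases n) simp_all
qed

definition gen_series :: "state \<Rightarrow> rat fps" where
  "gen_series s = Abs_fps (\<lambda>n. of_nat (card (gen_words n s)))"

lemma gen_series_eqs:
  shows "gen_series Closed = fps_X * (1 + gen_series Closed + gen_series Dipped)"
    and "gen_series Open = fps_X * (gen_series Closed + 2 * gen_series Open)"
    and "gen_series Dipped = fps_X * (gen_series Open + gen_series Dipped)"
  by (rule fps_eq_X_mult;
      simp add: gen_series_def gen_words_0 gen_words_1 card_gen_words_Suc numeral_fps_const
        del: of_nat_Suc)+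

lemma generated_words_eq_Un:
  "{x. length x = n \<and> (\<exists>s. generated x s)} =
    gen_words n Closed \<union> gen_words n Open \<union> gen_words n Dipped"
  by (auto simp: gen_words_def) (metis state.exhaust)

lemma a_P_eq_card_gen_words:
  assumes "P = pats_101_120 \<or> P = pats_0101_0120"
  shows "a_P P n = card (gen_words n Closed) + card (gen_words n Open) + card (gen_words n Dipped)"
proof -
  have "a_P P n = card {x. length x = n \<and> (\<exists>s. generated x s)}"
    using assms ascent_avoiders_eq_generated by (auto simp: a_P_def)
  also have "\<dots> = card (gen_words n Closed) + card (gen_words n Open) + card (gen_words n Dipped)"
    unfolding generated_words_eq_Un
    using gen_words_disjoint[of Closed Open n] gen_words_disjoint[of Closed Dipped n]
      gen_words_disjoint[of Open Dipped n]
    by (simp add: card_Un_disjoint finite_gen_words Int_Un_distrib2)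
  finally show ?thesis .
qed

lemma ascent_avoider_series:
  "Abs_fps (\<lambda>n. if n = 0 then 1 else (of_nat (a_P pats_0101_0120 n) :: rat)) *
     (1 - 4 * fps_X + 5 * fps_X ^ 2 - 3 * fps_X ^ 3) = (1 - fps_X) ^ 3"
proof -
  have series: "Abs_fps (\<lambda>n. if n = 0 then 1 else of_nat (a_P pats_0101_0120 n))
      = 1 + gen_series Closed + gen_series Open + gen_series Dipped"
    by (rule fps_ext) (simp add: gen_series_def a_P_eq_card_gen_words gen_words_0)
  show ?thesis
    unfolding series using gen_series_eqs by algebra
qed

section \<open>Permutations avoiding 231 and 4123\<close>

locale layered =
  fixes a g :: "nat list" and N :: nat
  assumes a_below_g: "x \<in> set a \<Longrightarrow> y \<in> set g \<Longrightarrow> x < y"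
    and a_below_N: "x \<in> set a \<Longrightarrow> x < N"
    and g_below_N: "y \<in> set g \<Longrightarrow> y < N"
begin

lemma not_less_across [simp]:
  "x \<in> set a \<Longrightarrow> y \<in> set g \<Longrightarrow> \<not> y < x"
  "x \<in> set a \<Longrightarrow> \<not> N < x" "y \<in> set g \<Longrightarrow> \<not> N < y"
  using a_below_g a_below_N g_below_N by (meson not_less_iff_gr_or_eq less_trans)+

lemma subseq_left_part: "subseq ys a \<Longrightarrow> subseq ys (a @ N # g)"
  by (simp add: subseq_rev_drop_many)

lemma subseq_right_part: "subseq ys g \<Longrightarrow> subseq ys (a @ N # g)"
  by (metis append_Cons append_Nil subseq_drop_many)

lemma subseq_max_right_part: "subseq ys g \<Longrightarrow> subseq (N # ys) (a @ N # g)"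
  by (simp add: subseq_drop_many)

lemma subseq_layersE:
  assumes "subseq ys (a @ N # g)"
  obtains ya yg where "subseq ya a" "subseq yg g" "set ya \<subseteq> set a" "set yg \<subseteq> set g"
    "ys = ya @ yg \<or> ys = ya @ N # yg"
  using assms set_mono_subseq unfolding subseq_append_Cons_iff by metis

lemma contains_120_iff: "contains (a @ N # g) [1,2,0] \<longleftrightarrow> contains a [1,2,0] \<or> contains g [1,2,0]"
proof
  assume "contains (a @ N # g) [1,2,0]"
  then obtain u v w where occ: "subseq [u,v,w] (a @ N # g)" "w < u" "u < v"
    unfolding contains_120 by blast
  from occ(1) obtain ya yg where "subseq ya a" "subseq yg g" "set ya \<subseteq> set a" "set yg \<subseteq> set g"
    "[u,v,w] = ya @ yg \<or> [u,v,w] = ya @ N # yg"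
    by (rule subseq_layersE)
  then have "subseq [u,v,w] a \<or> subseq [u,v,w] g"
    using occ(2,3) by (auto simp: Cons_eq_append_conv)
  then show "contains a [1,2,0] \<or> contains g [1,2,0]"
    unfolding contains_120 using occ(2,3) by blast
qed (use contains_mono subseq_left_part[OF subseq_order.refl] subseq_right_part[OF subseq_order.refl]
    in blast)

lemma contains_3012_iff:
  "contains (a @ N # g) [3,0,1,2] \<longleftrightarrow>
    contains a [3,0,1,2] \<or> contains g [3,0,1,2] \<or> contains g [0,1,2]"
proof
  assume "contains (a @ N # g) [3,0,1,2]"
  then obtain p q r t where occ: "subseq [p,q,r,t] (a @ N # g)" "q < r" "r < t" "t < p"
    unfolding contains_3012 by blast
  from occ(1) obtain ya yg where "subseq ya a" "subseq yg g" "set ya \<subseteq> set a" "set yg \<subseteq> set g"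
    "[p,q,r,t] = ya @ yg \<or> [p,q,r,t] = ya @ N # yg"
    by (rule subseq_layersE)
  then have "subseq [p,q,r,t] a \<or> subseq [p,q,r,t] g \<or> subseq [q,r,t] g"
    using occ(2-4) by (auto simp: Cons_eq_append_conv)
  then show "contains a [3,0,1,2] \<or> contains g [3,0,1,2] \<or> contains g [0,1,2]"
    unfolding contains_3012 contains_012 using occ(2-4) by blast
next
  assume "contains a [3,0,1,2] \<or> contains g [3,0,1,2] \<or> contains g [0,1,2]"
  moreover have "contains (a @ N # g) [3,0,1,2]" if "subseq [q,r,t] g" "q < r" "r < t" for q r t
  proof -
    have "t < N" using that(1) g_below_N set_mono_subseq by fastforce
    then show ?thesis
      unfolding contains_3012 using subseq_max_right_part[OF that(1)] that(2,3) by blast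
  qed
  then have "contains g [0,1,2] \<Longrightarrow> contains (a @ N # g) [3,0,1,2]"
    unfolding contains_012 by blast
  ultimately show "contains (a @ N # g) [3,0,1,2]"
    using contains_mono subseq_left_part[OF subseq_order.refl] subseq_right_part[OF subseq_order.refl]
    by blast
qed

lemma contains_012_with_max: "contains a [0,1] \<Longrightarrow> contains (a @ N # g) [0,1,2]"
proof -
  assume "contains a [0,1]"
  then obtain u v where uv: "subseq [u,v] a" "u < v"
    unfolding contains_01 by blast
  have "subseq ([u,v] @ [N]) (a @ N # g)"
    using uv(1) by (intro list_emb_append_mono) simp_all
  moreover have "v < N"
    using uv(1) a_below_N set_mono_subseq by fastforce
  ultimately show ?thesis
    unfolding contains_012 using uv(2) by auto
qed

lemma contains_012_across: "a \<noteq> [] \<Longrightarrow> contains g [0,1] \<Longrightarrow> contains (a @ N # g) [0,1,2]"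
proof -
  assume "a \<noteq> []" "contains g [0,1]"
  then obtain u v w where "u \<in> set a" "subseq [v,w] g" "v < w"
    unfolding contains_01 using hd_in_set by blast
  moreover from this have "u < v"
    using a_below_g set_mono_subseq by fastforce
  moreover from calculation have "subseq ([u] @ [v,w]) (a @ N # g)"
    by (intro list_emb_append_mono list_emb_Cons) (simp_all add: subseq_singleton_left)
  ultimately show ?thesis
    unfolding contains_012 by auto
qed

lemma contains_012_iff:
  "contains (a @ N # g) [0,1,2] \<longleftrightarrow> contains a [0,1] \<or> contains g [0,1,2] \<or> a \<noteq> [] \<and> contains g [0,1]"
proof
  assume "contains (a @ N # g) [0,1,2]"
  then obtain u v w where occ: "subseq [u,v,w] (a @ N # g)" "u < v" "v < w"
    unfolding contains_012 by blast
  from occ(1) obtain ya yg where "subseq ya a" "subseq yg g" "set ya \<subseteq> set a" "set yg \<subseteq> set g"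
    "[u,v,w] = ya @ yg \<or> [u,v,w] = ya @ N # yg"
    by (rule subseq_layersE)
  then have "subseq [u,v,w] a \<or> subseq [u,v] a \<or> subseq [u,v,w] g \<or> u \<in> set a \<and> subseq [v,w] g"
    using occ(2,3) by (auto simp: Cons_eq_append_conv)
  moreover have "subseq [u,v] [u,v,w]"
    by (rule prefix_imp_subseq) simp
  then have "subseq [u,v,w] a \<Longrightarrow> subseq [u,v] a"
    by (rule subseq_order.trans)
  moreover have "u \<in> set a \<Longrightarrow> a \<noteq> []" by auto
  ultimately show "contains a [0,1] \<or> contains g [0,1,2] \<or> a \<noteq> [] \<and> contains g [0,1]"
    unfolding contains_012 contains_01 using occ(2,3) by blast
next
  assume "contains a [0,1] \<or> contains g [0,1,2] \<or> a \<noteq> [] \<and> contains g [0,1]"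
  then show "contains (a @ N # g) [0,1,2]"
    using contains_012_with_max contains_012_across contains_mono
      subseq_right_part[OF subseq_order.refl] by blast
qed

end

definition perm_avoiders :: "nat \<Rightarrow> nat list set \<Rightarrow> nat list set" where
  "perm_avoiders n P = {s. is_perm n s \<and> avoids_all s P}"

lemma finite_perm_avoiders: "finite (perm_avoiders n P)"
proof (rule finite_subset)
  show "perm_avoiders n P \<subseteq> {xs. set xs \<subseteq> {1..n} \<and> length xs = n}"
    by (auto simp: perm_avoiders_def is_perm_def)
qed (rule finite_lists_length_eq, simp)

lemma perm_avoiders_0: "[] \<notin> P \<Longrightarrow> perm_avoiders 0 P = {[]}"
  by (auto simp: perm_avoiders_def is_perm_def avoids_all_def contains_def red_def
      dest: list_emb_Nil2)

lemma is_perm_join: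
  assumes "is_perm k a" "is_perm m b"
  shows "is_perm (Suc (k + m)) (a @ Suc (k + m) # map (\<lambda>v. v + k) b)"
proof -
  have "set (map (\<lambda>v. v + k) b) = {Suc k..k + m}"
    using assms(2) by (simp add: is_perm_def add.commute)
  moreover have "distinct (map (\<lambda>v. v + k) b)"
    using assms(2) by (simp add: is_perm_def distinct_map)
  ultimately show ?thesis
    using assms by (auto simp: is_perm_def)
qed

lemma layered_join:
  "is_perm k a \<Longrightarrow> is_perm m b \<Longrightarrow> layered a (map (\<lambda>v. v + k) b) (Suc (k + m))"
  by unfold_locales (auto simp: is_perm_def)

lemma contains_join:
  assumes "is_perm k a" "is_perm m b"
  shows "contains (a @ Suc (k + m) # map (\<lambda>v. v + k) b) [1,2,0] \<longleftrightarrow>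
      contains a [1,2,0] \<or> contains b [1,2,0]"
    and "contains (a @ Suc (k + m) # map (\<lambda>v. v + k) b) [3,0,1,2] \<longleftrightarrow>
      contains a [3,0,1,2] \<or> contains b [3,0,1,2] \<or> contains b [0,1,2]"
    and "contains (a @ Suc (k + m) # map (\<lambda>v. v + k) b) [0,1,2] \<longleftrightarrow>
      contains a [0,1] \<or> contains b [0,1,2] \<or> a \<noteq> [] \<and> contains b [0,1]"
  using layered.contains_120_iff[OF layered_join[OF assms]]
    layered.contains_3012_iff[OF layered_join[OF assms]]
    layered.contains_012_iff[OF layered_join[OF assms]]
  by (simp_all only: contains_shift)

lemma lower_part_eq_atLeastAtMost:
  assumes "A \<union> B = {1..n}" "\<forall>x\<in>A. \<forall>y\<in>B. x < y"
  shows "A = {1..card A}"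
proof -
  have fin: "finite A" using assms(1) by (metis finite_Un finite_atLeastAtMost)
  have "x \<le> card A" if x: "x \<in> A" for x
  proof -
    have "y \<in> A" if "y \<in> {1..x}" for y
    proof -
      have "x \<le> n" using assms(1) x by auto
      then have "y \<in> A \<union> B" using assms(1) that by auto
      moreover have "y \<notin> B" using assms(2) x that by force
      ultimately show ?thesis by blast
    qed
    then have "card {1..x} \<le> card A"
      by (intro card_mono fin) blast
    then show ?thesis by simp
  qed
  then have "A \<subseteq> {1..card A}"
    using assms(1) by auto
  then show ?thesis
    using fin by (intro card_subset_eq) auto
qed

lemma is_perm_unshift:
  assumes "distinct g" "set g = {Suc k..k + m}"
  shows "is_perm m (map (\<lambda>v. v - k) g)" "g = map (\<lambda>v. v + k) (map (\<lambda>v. v - k) g)"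
proof -
  have "inj_on (\<lambda>v. v - k) (set g)"
    using assms(2) by (auto simp: inj_on_def)
  moreover have "(\<lambda>v. v - k) ` (\<lambda>v. v + k) ` {1..m} = {1..m}"
    unfolding image_image by simp
  then have "(\<lambda>v. v - k) ` {Suc k..k + m} = {1..m}"
    by (simp add: add.commute)
  moreover have "length g = m"
    using assms distinct_card[of g] by simp
  ultimately show "is_perm m (map (\<lambda>v. v - k) g)"
    using assms by (simp add: is_perm_def distinct_map)
  show "g = map (\<lambda>v. v + k) (map (\<lambda>v. v - k) g)"
    unfolding map_map using assms(2) by (intro map_idI[symmetric]) auto
qed

lemma avoids_120_left_below_right:
  assumes "\<not> contains (a @ N # g) [1,2,0]" "x \<in> set a" "y \<in> set g" "x < N" "x \<noteq> y"
  shows "x < y"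
proof (rule ccontr)
  assume "\<not> x < y"
  then have "y < x" using assms(5) by simp
  have "subseq [x] a" "subseq [N, y] (N # g)"
    using assms(2,3) by (simp_all add: subseq_singleton_left)
  then have "subseq ([x] @ [N, y]) (a @ N # g)"
    by (rule list_emb_append_mono)
  then have "contains (a @ N # g) [1,2,0]"
    unfolding contains_120 using \<open>y < x\<close> assms(4)
    by (intro exI[of _ x] exI[of _ N] exI[of _ y]) simp
  with assms(1) show False ..
qed

lemma perm_split_at_max:
  assumes perm: "is_perm (Suc n) s" and avoid: "\<not> contains s [1,2,0]"
  obtains k a b where "k \<le> n" "is_perm k a" "is_perm (n - k) b" "s = a @ Suc n # map (\<lambda>v. v + k) b"
proof -
  have "Suc n \<in> set s"
    using perm by (simp add: is_perm_def)
  then obtain a g where s: "s = a @ Suc n # g"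
    by (meson split_list)
  have dist: "distinct a" "distinct g" "set a \<inter> set g = {}"
    using perm s by (auto simp: is_perm_def)
  have "insert (Suc n) (set a \<union> set g) = insert (Suc n) {1..n}" "Suc n \<notin> set a \<union> set g"
    using perm s by (auto simp: is_perm_def atLeastAtMostSuc_conv)
  then have union: "set a \<union> set g = {1..n}"
    by (simp add: insert_ident)
  have below: "\<forall>x\<in>set a. \<forall>y\<in>set g. x < y"
  proof (intro ballI)
    fix x y assume xy: "x \<in> set a" "y \<in> set g"
    have "x \<in> {1..n}" using union xy(1) by blast
    then have "x < Suc n" by simp
    moreover have "x \<noteq> y" using dist(3) xy by auto
    ultimately show "x < y"
      using avoids_120_left_below_right[OF avoid[unfolded s] xy] by blast
  qed
  let ?k = "length a"
  have set_a: "set a = {1..?k}"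
    using lower_part_eq_atLeastAtMost[OF union below] distinct_card[OF dist(1)] by simp
  have k_le: "?k \<le> n"
    using perm s by (simp add: is_perm_def)
  have "set g = {1..n} - {1..?k}"
    using union dist(3) set_a by blast
  also have "\<dots> = {Suc ?k..?k + (n - ?k)}"
    using k_le by auto
  finally have k: "?k \<le> n" "set g = {Suc ?k..?k + (n - ?k)}"
    using k_le by simp_all
  show ?thesis
  proof (rule that)
    show "is_perm ?k a" using set_a dist(1) by (simp add: is_perm_def)
    show "is_perm (n - ?k) (map (\<lambda>v. v - ?k) g)"
      "s = a @ Suc n # map (\<lambda>v. v + ?k) (map (\<lambda>v. v - ?k) g)"
      using is_perm_unshift[OF dist(2) k(2)] s by simp_all
  qed (rule k(1))
qed

lemma perm_join_inj:
  assumes "is_perm k a" "is_perm (n - k) b" "k \<le> n" "is_perm k' a'"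
    and eq: "a @ Suc n # map (\<lambda>v. v + k) b = a' @ Suc n # map (\<lambda>v. v + k') b'"
  shows "k = k' \<and> a = a' \<and> b = b'"
proof -
  have "\<forall>x\<in>set a. x \<le> n" "\<forall>x\<in>set b. x + k \<le> n"
    using assms(1-3) by (auto simp: is_perm_def)
  then have "Suc n \<notin> set a" "Suc n \<notin> set (map (\<lambda>v. v + k) b)"
    by auto
  from append_Cons_eq_iff[OF this, of a' "map (\<lambda>v. v + k') b'"]
  have "a = a'" "map (\<lambda>v. v + k) b = map (\<lambda>v. v + k') b'"
    using eq by simp_all
  moreover have "k = k'"
    using assms(1,4) \<open>a = a'\<close> by (simp add: is_perm_def)
  ultimately show ?thesis
    by simp
qed

lemma card_perm_joins:
  assumes A: "\<And>k a. a \<in> A k \<Longrightarrow> is_perm k a" and B: "\<And>k b. b \<in> B k \<Longrightarrow> is_perm (n - k) b"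
    and fin: "\<And>k. finite (A k)" "\<And>k. finite (B k)"
  shows "card {a @ Suc n # map (\<lambda>v. v + k) b | k a b. k \<le> n \<and> a \<in> A k \<and> b \<in> B k}
    = (\<Sum>k\<le>n. card (A k) * card (B k))"
proof -
  let ?f = "\<lambda>(k, a, b). a @ Suc n # map (\<lambda>v. v + k) b"
  have "inj_on ?f (SIGMA k:{..n}. A k \<times> B k)"
  proof (rule inj_onI, clarsimp)
    fix k a b k' a' b'
    assume "k \<le> n" "a \<in> A k" "b \<in> B k" "a' \<in> A k'"
      and "a @ Suc n # map (\<lambda>v. v + k) b = a' @ Suc n # map (\<lambda>v. v + k') b'"
    then show "k = k' \<and> a = a' \<and> b = b'"
      using A B perm_join_inj by metis
  qed
  moreover have "{a @ Suc n # map (\<lambda>v. v + k) b | k a b. k \<le> n \<and> a \<in> A k \<and> b \<in> B k}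
      = ?f ` (SIGMA k:{..n}. A k \<times> B k)" (is "?X = _")
  proof (intro equalityI subsetI)
    fix s assume "s \<in> ?X"
    then obtain k a b where "s = a @ Suc n # map (\<lambda>v. v + k) b" "k \<le> n" "a \<in> A k" "b \<in> B k"
      by blast
    then show "s \<in> ?f ` (SIGMA k:{..n}. A k \<times> B k)"
      by (intro rev_image_eqI[of "(k, a, b)"]) auto
  qed auto
  ultimately show ?thesis
    using fin by (simp add: card_image card_cartesian_product)
qed

lemma mem_perm_avoiders_Suc:
  assumes "[1,2,0] \<in> P"
  shows "s \<in> perm_avoiders (Suc n) P \<longleftrightarrow> (\<exists>k a b. s = a @ Suc n # map (\<lambda>v. v + k) b \<and>
      k \<le> n \<and> is_perm k a \<and> is_perm (n - k) b \<and> avoids_all s P)" (is "_ \<longleftrightarrow> ?R")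
proof
  assume "s \<in> perm_avoiders (Suc n) P"
  then have "is_perm (Suc n) s" "\<not> contains s [1,2,0]" "avoids_all s P"
    using assms by (auto simp: perm_avoiders_def avoids_all_def)
  then show ?R
    by (metis perm_split_at_max)
next
  assume ?R
  then show "s \<in> perm_avoiders (Suc n) P"
    using is_perm_join by (fastforce simp: perm_avoiders_def)
qed

lemma card_perm_avoiders_Suc:
  assumes "[1,2,0] \<in> P"
    and avoids: "\<And>k a b. k \<le> n \<Longrightarrow> is_perm k a \<Longrightarrow> is_perm (n - k) b \<Longrightarrow>
      avoids_all (a @ Suc n # map (\<lambda>v. v + k) b) P \<longleftrightarrow> a \<in> A k \<and> b \<in> B k"
    and A: "\<And>k a. a \<in> A k \<Longrightarrow> is_perm k a" and B: "\<And>k b. b \<in> B k \<Longrightarrow> is_perm (n - k) b"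
    and fin: "\<And>k. finite (A k)" "\<And>k. finite (B k)"
  shows "card (perm_avoiders (Suc n) P) = (\<Sum>k\<le>n. card (A k) * card (B k))"
proof -
  have "perm_avoiders (Suc n) P =
      {a @ Suc n # map (\<lambda>v. v + k) b | k a b. k \<le> n \<and> a \<in> A k \<and> b \<in> B k}"
    unfolding set_eq_iff mem_perm_avoiders_Suc[OF assms(1)] using avoids A B by blast
  then show ?thesis
    using card_perm_joins[OF A B fin] by simp
qed

text \<open>Patterns are in reduced form: [1,2,0] is 231, [3,0,1,2] is 4123 and [0,1,2] is 123.\<close>

definition pats_231_4123 :: "nat list set" where
  "pats_231_4123 = {[1,2,0], [3,0,1,2]}"

definition pats_231_123 :: "nat list set" where
  "pats_231_123 = {[1,2,0], [0,1,2]}"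

lemma card_perm_avoiders_231_4123_Suc:
  "card (perm_avoiders (Suc n) pats_231_4123) =
    (\<Sum>k\<le>n. card (perm_avoiders k pats_231_4123) * card (perm_avoiders (n - k) pats_231_123))"
proof (rule card_perm_avoiders_Suc)
  fix k a b assume "k \<le> n" "is_perm k a" "is_perm (n - k) b"
  then show "avoids_all (a @ Suc n # map (\<lambda>v. v + k) b) pats_231_4123 \<longleftrightarrow>
      a \<in> perm_avoiders k pats_231_4123 \<and> b \<in> perm_avoiders (n - k) pats_231_123"
    using contains_join[of k a "n - k" b] contains_3012_imp_012
    unfolding perm_avoiders_def pats_231_4123_def pats_231_123_def avoids_all_pair by auto
qed (simp add: finite_perm_avoiders | simp add: perm_avoiders_def pats_231_4123_def)+

lemma card_perm_avoiders_231_123_Suc_sum: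
  "card (perm_avoiders (Suc n) pats_231_123) =
    (\<Sum>k\<le>n. card (perm_avoiders k {[0,1]}) *
      card (if k = 0 then perm_avoiders n pats_231_123 else perm_avoiders (n - k) {[0,1]}))"
proof (rule card_perm_avoiders_Suc)
  fix k a b assume "k \<le> n" "is_perm k a" "is_perm (n - k) b"
  moreover have "a = [] \<longleftrightarrow> k = 0"
    using \<open>is_perm k a\<close> by (auto simp: is_perm_def)
  ultimately show "avoids_all (a @ Suc n # map (\<lambda>v. v + k) b) pats_231_123 \<longleftrightarrow>
      a \<in> perm_avoiders k {[0,1]} \<and>
      b \<in> (if k = 0 then perm_avoiders n pats_231_123 else perm_avoiders (n - k) {[0,1]})"
    using contains_join[of k a "n - k" b] contains_120_imp_01 contains_012_imp_01
    unfolding perm_avoiders_def pats_231_123_def avoids_all_pair avoids_all_singleton by auto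
qed (simp add: finite_perm_avoiders |
    simp add: perm_avoiders_def pats_231_123_def split: if_splits)+

lemma perm_avoiders_12: "perm_avoiders k {[0,1]} = {rev [1..<Suc k]}"
proof (intro set_eqI iffI)
  fix s assume "s \<in> perm_avoiders k {[0,1]}"
  then have "sorted (rev s)" "distinct (rev s)" "set (rev s) = set [1..<Suc k]"
    unfolding perm_avoiders_def avoids_all_singleton contains_01 is_perm_def sorted_wrt_rev
    unfolding sorted_wrt_iff_subseq by (auto simp: not_less atLeastLessThanSuc_atLeastAtMost)
  then have "rev s = [1..<Suc k]"
    by (metis sorted_distinct_set_unique sorted_upt distinct_upt)
  then show "s \<in> {rev [1..<Suc k]}"
    by (metis rev_rev_ident singletonI)
next
  fix s assume "s \<in> {rev [1..<Suc k]}"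
  then have "sorted_wrt (\<ge>) s" "is_perm k s"
    by (simp_all add: sorted_wrt_rev is_perm_def atLeastLessThanSuc_atLeastAtMost del: upt_Suc)
  then show "s \<in> perm_avoiders k {[0,1]}"
    unfolding perm_avoiders_def avoids_all_singleton contains_01 sorted_wrt_iff_subseq
    by (auto simp: not_less)
qed

lemma card_perm_avoiders_231_123_Suc:
  "card (perm_avoiders (Suc n) pats_231_123) = card (perm_avoiders n pats_231_123) + n"
  unfolding card_perm_avoiders_231_123_Suc_sum perm_avoiders_12
  by (simp add: sum.atMost_shift)

definition perm_series :: "nat list set \<Rightarrow> rat fps" where
  "perm_series P = Abs_fps (\<lambda>n. of_nat (card (perm_avoiders n P)))"

lemma perm_avoider_series:
  "perm_series pats_231_4123 * (1 - 4 * fps_X + 5 * fps_X ^ 2 - 3 * fps_X ^ 3) = (1 - fps_X) ^ 3"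
proof -
  let ?F = "perm_series pats_231_4123" and ?T = "perm_series pats_231_123"
  let ?N = "Abs_fps (\<lambda>n. of_nat n) :: rat fps" and ?G = "Abs_fps (\<lambda>n. 1) :: rat fps"
  have empty: "perm_avoiders 0 pats_231_4123 = {[]}" "perm_avoiders 0 pats_231_123 = {[]}"
    by (simp_all add: perm_avoiders_0 pats_231_4123_def pats_231_123_def)
  have "?F - 1 = fps_X * (?F * ?T)"
    by (rule fps_eq_X_mult)
      (simp_all add: perm_series_def empty card_perm_avoiders_231_4123_Suc fps_mult_nth
        atLeast0AtMost)
  moreover have "?T - 1 = fps_X * (?T + ?N)"
    by (rule fps_eq_X_mult)
      (simp_all add: perm_series_def empty card_perm_avoiders_231_123_Suc)
  moreover have "?N = fps_X * (?N + ?G)"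
    by (rule fps_eq_X_mult) simp_all
  moreover have "?G - 1 = fps_X * ?G"
    by (rule fps_eq_X_mult) simp_all
  ultimately show ?thesis
    by algebra
qed

lemma fps_denominator_nonzero: "(1 - 4 * fps_X + 5 * fps_X ^ 2 - 3 * fps_X ^ 3 :: rat fps) \<noteq> 0"
proof -
  have "(1 - 4 * fps_X + 5 * fps_X ^ 2 - 3 * fps_X ^ 3 :: rat fps) $ 0 \<noteq> 0"
    by simp
  then show ?thesis
    by (metis fps_zero_nth)
qed

lemma S_231_4123_eq_perm_avoiders: "S_231_4123 n = perm_avoiders n pats_231_4123"
  by (simp add: S_231_4123_def perm_avoiders_def pats_231_4123_def perm_contains_def avoids_all_def
      contains_def)

theorem theorem3p4:
  shows "(\<forall>n\<ge>1. a_P {[0,1,0,1],[0,1,2,0]} n = a_P {[1,0,1],[1,2,0]} n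
                \<and> a_P {[1,0,1],[1,2,0]} n = card (S_231_4123 n))
     \<and> Abs_fps (\<lambda>n. if n = 0 then 1 else (of_nat (a_P {[0,1,0,1],[0,1,2,0]} n) :: rat))
         = (1 - fps_X) ^ 3 / (1 - 4 * fps_X + 5 * fps_X ^ 2 - 3 * fps_X ^ 3)"
proof -
  let ?A = "Abs_fps (\<lambda>n. if n = 0 then 1 else (of_nat (a_P pats_0101_0120 n) :: rat))"
  let ?D = "1 - 4 * fps_X + 5 * fps_X ^ 2 - 3 * fps_X ^ 3 :: rat fps"
  have same: "a_P pats_0101_0120 n = a_P pats_101_120 n" for n
    using a_P_eq_card_gen_words[of pats_101_120] a_P_eq_card_gen_words[of pats_0101_0120] by simp
  have "?A * ?D = perm_series pats_231_4123 * ?D"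
    using ascent_avoider_series perm_avoider_series by simp
  then have "?A = perm_series pats_231_4123"
    using fps_denominator_nonzero by simp
  then have coeff: "?A $ n = perm_series pats_231_4123 $ n" for n
    by simp
  have "a_P pats_0101_0120 n = card (S_231_4123 n)" if "n \<ge> 1" for n
    using coeff[of n] that by (simp add: perm_series_def S_231_4123_eq_perm_avoiders)
  moreover have "?A = (1 - fps_X) ^ 3 / ?D"
    using ascent_avoider_series[symmetric] fps_denominator_nonzero by simp
  ultimately show ?thesis
    unfolding pats_0101_0120_def[symmetric] pats_101_120_def[symmetric] using same by simp
qed

end
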